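(* Let $\epsilon, b \in \mathbb{C}$ with $\epsilon \neq 0$. Consider the map $\Phi:(x,y)\mapsto(\widetilde x,\widetilde y)$ of $\mathbb{C}^2$ defined implicitly by the system \[ \frac{\widetilde x - x}{\epsilon}=\widetilde x\, y+x\,\widetilde y, \qquad \frac{\widetilde y - y}{\epsilon}= b+x\widetilde x -(2-\epsilon^2b)\, y\widetilde y, \] which is linear in $(\widetilde x,\widetilde y)$ and so defines a rational map (birational). Then $\Phi$ is integrable in the sense that the rational function \[ H(x,y;\epsilon)=\frac{x^2\big((1-\tfrac{1}{2}\epsilon^2b)y^2-\tfrac{1}{4}(1-\epsilon^2b)x^2-\tfrac{1}{2}b\big)}{\big(1+\epsilon(y+x)\big)\big(1+\epsilon(y-x)\big)\big(1-\epsilon(y+x)\big)\big(1-\epsilon(y-x)\big)} \] is an integral of motion of $\Phi$: $H(\widetilde x,\widetilde y;\epsilon)=H(x,y;\epsilon)$ for all $(x,y)$ at which $\Phi$ and both sides are defined.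
   Context: This map is a modification of the Kahan discretization of the planar system $\dot x=2xy$, $\dot y=b+x^2-2y^2$ (whose standard Kahan discretization has coefficient $2$ instead of $2-\epsilon^2 b$ in front of $y\widetilde y$). An integral of motion of a map $\Phi$ is a (nonconstant) function $H$ with $H\circ\Phi=H$. *)

theory Defs
  imports Complex_Main
begin

definition kahan_sys :: "complex \<Rightarrow> complex \<Rightarrow> complex \<Rightarrow> complex \<Rightarrow> complex \<Rightarrow> complex \<Rightarrow> bool" where
  "kahan_sys \<epsilon> b x y xt yt \<longleftrightarrow>
     (xt - x) / \<epsilon> = xt * y + x * yt \<and>
     (yt - y) / \<epsilon> = b + x * xt - (2 - \<epsilon>^2 * b) * y * yt"

definition H_den :: "complex \<Rightarrow> complex \<Rightarrow> complex \<Rightarrow> complex" where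
  "H_den \<epsilon> x y = (1 + \<epsilon> * (y + x)) * (1 + \<epsilon> * (y - x)) * (1 - \<epsilon> * (y + x)) * (1 - \<epsilon> * (y - x))"

definition H :: "complex \<Rightarrow> complex \<Rightarrow> complex \<Rightarrow> complex \<Rightarrow> complex" where
  "H \<epsilon> b x y = x^2 * ((1 - \<epsilon>^2 * b / 2) * y^2 - (1 - \<epsilon>^2 * b) * x^2 / 4 - b / 2) / H_den \<epsilon> x y"

end

theory Submission
  imports Defs
begin

text \<open>
  Clearing the (linear) denominators of the Kahan system gives two polynomial relations
  between (x, y) and its image (X, Y). The invariance of H is then the polynomial identity
  num(X, Y) den(x, y) = num(x, y) den(X, Y), which lies in the ideal generated by these
  two relations; this ideal-membership certificate is found by Groebner basis reduction.
\<close>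

definition H_num :: "complex \<Rightarrow> complex \<Rightarrow> complex \<Rightarrow> complex \<Rightarrow> complex" where
  "H_num \<epsilon> b x y = x^2 * ((1 - \<epsilon>^2 * b / 2) * y^2 - (1 - \<epsilon>^2 * b) * x^2 / 4 - b / 2)"

lemma H_eq_H_num_div_H_den: "H \<epsilon> b x y = H_num \<epsilon> b x y / H_den \<epsilon> x y"
  by (simp add: H_def H_num_def)

lemma kahan_sys_iff_polynomial:
  assumes "\<epsilon> \<noteq> 0"
  shows "kahan_sys \<epsilon> b x y X Y \<longleftrightarrow>
    X - x = \<epsilon> * (X * y + x * Y) \<and> Y - y = \<epsilon> * (b + x * X - (2 - \<epsilon>^2 * b) * y * Y)"
  using assms by (auto simp: kahan_sys_def field_simps)

lemma H_cross_multiplied_invariant: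
  assumes "X - x = \<epsilon> * (X * y + x * Y)"
    and "Y - y = \<epsilon> * (b + x * X - (2 - \<epsilon>^2 * b) * y * Y)"
  shows "H_num \<epsilon> b X Y * H_den \<epsilon> x y = H_num \<epsilon> b x y * H_den \<epsilon> X Y"
  using assms unfolding H_num_def H_den_def by algebra

theorem theorem1:
  fixes \<epsilon> b x y xt yt :: complex
  assumes "\<epsilon> \<noteq> 0"
    and "kahan_sys \<epsilon> b x y xt yt"
    and "\<forall>u v. kahan_sys \<epsilon> b x y u v \<longrightarrow> u = xt \<and> v = yt"
    and "H_den \<epsilon> x y \<noteq> 0"
    and "H_den \<epsilon> xt yt \<noteq> 0"
  shows "H \<epsilon> b xt yt = H \<epsilon> b x y"
proof -
  have "H_num \<epsilon> b xt yt * H_den \<epsilon> x y = H_num \<epsilon> b x y * H_den \<epsilon> xt yt"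
    using assms(2) kahan_sys_iff_polynomial[OF assms(1)] H_cross_multiplied_invariant by blast
  with assms(4,5) show ?thesis
    by (simp add: H_eq_H_num_div_H_den divide_eq_eq eq_divide_eq)
qed

end
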